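(* Assume (A1)–(A4). If $\beta$ is a point of differentiability of $p$, then $$\lim_{n\to\infty}\Big\langle\Big|\frac{H_n(\sigma)}{n}-p'(\beta)\Big|\Big\rangle_\beta=0\quad\text{a.s. and in }L^1(\mathbb P),$$ where $\langle\cdot\rangle_\beta$ denotes expectation under $\mu_n^\beta$.
   Context: Setting: $(\Omega,\mathcal F,\mathbb P)$ is a probability space, $(\Sigma_n)_{n\ge1}$ are Polish spaces with Borel probability measures $P_n$, and for each $n$, $(H_n(\sigma))_{\sigma\in\Sigma_n}$ is a centered Gaussian field defined on $\Omega$. For $\beta\in\mathbb R$ the Gibbs measure is $\mu_n^\beta(d\sigma)=e^{\beta H_n(\sigma)}P_n(d\sigma)/Z_n(\beta)$ with $Z_n(\beta)=\int e^{\beta H_n(\sigma)}P_n(d\sigma)$, and the free energy is $F_n(\beta)=\frac1n\log Z_n(\beta)$. Standing assumptions: (A1) there is a deterministic $p:\mathbb R\to\mathbb R$ with $F_n(\beta)\to p(\beta)$ $\mathbb P$-a.s. and in $L^1(\mathbb P)$ for every $\beta\in\mathbb R$; (A2) $\operatorname{Var}H_n(\sigma)=n$ for all $\sigma\in\Sigma_n$; (A3) $\operatorname{Cov}(H_n(\sigma^1),H_n(\sigma^2))\ge -n\mathscr E_n$ for all $\sigma^1,\sigma^2$, where $\mathscr E_n\ge0$ are constants with $\mathscr E_n\to0$; (A4) for each $n$ there are measurable $\varphi_{i,n}:\Sigma_n\to\mathbb R$ and i.i.d. standard normal $g_{i,n}$ on $\Omega$ ($i\ge1$) such that for each $\sigma$,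 a.s. $H_n(\sigma)=\sum_{i\ge1} g_{i,n}\varphi_{i,n}(\sigma)$, the series converging in $L^2(\mathbb P)$. *)

theory Defs
  imports "HOL-Probability.Probability"
begin

definition centered_gaussian :: "'w measure \<Rightarrow> ('w \<Rightarrow> real) \<Rightarrow> bool" where
  "centered_gaussian M X \<longleftrightarrow> X \<in> borel_measurable M \<and>
     ((\<exists>s>0. distributed M lborel X (normal_density 0 s)) \<or> (AE \<omega> in M. X \<omega> = 0))"

definition centered_gaussian_field :: "'w measure \<Rightarrow> 'i set \<Rightarrow> ('i \<Rightarrow> 'w \<Rightarrow> real) \<Rightarrow> bool" where
  "centered_gaussian_field M T X \<longleftrightarrow>
     (\<forall>I c. finite I \<longrightarrow> I \<subseteq> T \<longrightarrow> centered_gaussian M (\<lambda>\<omega>. \<Sum>i\<in>I. c i * X i \<omega>))"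

definition covariance :: "'w measure \<Rightarrow> ('w \<Rightarrow> real) \<Rightarrow> ('w \<Rightarrow> real) \<Rightarrow> real" where
  "covariance M X Y = (\<integral>\<omega>. (X \<omega> - (\<integral>x. X x \<partial>M)) * (Y \<omega> - (\<integral>x. Y x \<partial>M)) \<partial>M)"

definition partition_fn :: "'a measure \<Rightarrow> ('a \<Rightarrow> real) \<Rightarrow> real \<Rightarrow> real" where
  "partition_fn P h \<beta> = (\<integral>\<sigma>. exp (\<beta> * h \<sigma>) \<partial>P)"

definition free_energy :: "nat \<Rightarrow> 'a measure \<Rightarrow> ('a \<Rightarrow> real) \<Rightarrow> real \<Rightarrow> real" where
  "free_energy n P h \<beta> = ln (partition_fn P h \<beta>) / real n"

definition gibbs_avg :: "'a measure \<Rightarrow> ('a \<Rightarrow> real) \<Rightarrow> real \<Rightarrow> ('a \<Rightarrow> real) \<Rightarrow> real" where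
  "gibbs_avg P h \<beta> f = (\<integral>\<sigma>. f \<sigma> * exp (\<beta> * h \<sigma>) \<partial>P) / partition_fn P h \<beta>"

end

theory Submission
  imports Defs
begin

text \<open>
  Averaging \<open>e\<^sup>u \<ge> 1 + u\<close> against a Gibbs measure gives
  \<open>\<langle>|y|\<rangle> \<le> ln (\<langle>e\<^sup>y\<rangle> + \<langle>e\<^sup>-\<^sup>y\<rangle>)\<close>. For \<open>y = n\<delta> (H/n - q)\<close> the two exponential moments are
  ratios of partition functions at \<open>\<beta> \<plusminus> \<delta>\<close>, so
  \<open>\<langle>|H/n - q|\<rangle>\<^sub>\<beta> \<le> ln 2 / (n\<delta>) + max (F\<^sub>n(\<beta>+\<delta>) - F\<^sub>n(\<beta>) - \<delta>q) (F\<^sub>n(\<beta>-\<delta>) - F\<^sub>n(\<beta>) + \<delta>q) / \<delta>\<close>.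
  As \<open>n \<rightarrow> \<infinity>\<close> the free energies converge to \<open>p\<close> almost surely and in \<open>L\<^sup>1\<close>, and as
  \<open>\<delta> \<rightarrow> 0\<close> the limiting bound vanishes for \<open>q = p'(\<beta>)\<close> because \<open>p\<close> is differentiable at \<open>\<beta>\<close>.
  Gaussian tails of each \<open>H\<^sub>n(\<sigma>)\<close> make all the partition functions finite almost surely.
\<close>

section \<open>Gibbs averages and free energy increments\<close>

lemma integral_pos_prob_space:
  fixes f :: "'a \<Rightarrow> real"
  assumes "prob_space Q" and "integrable Q f" and "\<And>x. f x > 0"
  shows "(\<integral>x. f x \<partial>Q) > 0"
proof -
  interpret Q: prob_space Q by fact
  have "(\<integral>x. f x \<partial>Q) \<noteq> 0"
  proof
    assume "(\<integral>x. f x \<partial>Q) = 0"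
    then have "AE x in Q. f x = 0"
      using assms by (subst (asm) integral_nonneg_eq_0_iff_AE) (auto intro: less_imp_le)
    then show False using assms(3) by (simp add: Q.AE_False less_imp_neq[symmetric])
  qed
  moreover have "(\<integral>x. f x \<partial>Q) \<ge> 0" using assms(3) by (simp add: less_imp_le)
  ultimately show ?thesis by linarith
qed

lemma partition_fn_pos:
  assumes "prob_space Q" and "integrable Q (\<lambda>x. exp (b * h x))"
  shows "partition_fn Q h b > 0"
  unfolding partition_fn_def using assms by (rule integral_pos_prob_space) simp

lemma gibbs_avg_nonneg:
  assumes "\<And>x. f x \<ge> 0"
  shows "gibbs_avg Q h \<beta> f \<ge> 0"
  unfolding gibbs_avg_def partition_fn_def using assms by simp

lemma gibbs_avg_cmult: "gibbs_avg Q h \<beta> (\<lambda>x. c * f x) = c * gibbs_avg Q h \<beta> f"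
  by (simp add: gibbs_avg_def mult.assoc)

lemma gibbs_avg_exp:
  "gibbs_avg Q h \<beta> (\<lambda>x. exp (a * h x)) = partition_fn Q h (\<beta> + a) / partition_fn Q h \<beta>"
  by (simp add: gibbs_avg_def partition_fn_def algebra_simps flip: exp_add)

lemma gibbs_avg_abs_le_ln_exp_moments:
  assumes Q: "prob_space Q" and y: "y \<in> borel_measurable Q"
    and int0: "integrable Q (\<lambda>x. exp (\<beta> * h x))"
    and int_plus: "integrable Q (\<lambda>x. exp (y x) * exp (\<beta> * h x))"
    and int_minus: "integrable Q (\<lambda>x. exp (- y x) * exp (\<beta> * h x))"
  shows "gibbs_avg Q h \<beta> (\<lambda>x. \<bar>y x\<bar>)
    \<le> ln (gibbs_avg Q h \<beta> (\<lambda>x. exp (y x)) + gibbs_avg Q h \<beta> (\<lambda>x. exp (- y x)))"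
proof -
  define w where "w x = exp (\<beta> * h x)" for x
  define Z where "Z = partition_fn Q h \<beta>"
  define I_plus where "I_plus = (\<integral>x. exp (y x) * w x \<partial>Q)"
  define I_minus where "I_minus = (\<integral>x. exp (- y x) * w x \<partial>Q)"
  define c where "c = ln ((I_plus + I_minus) / Z)"
  define R where "R x = exp (- c) * (exp (y x) * w x) + exp (- c) * (exp (- y x) * w x) + (c - 1) * w x"
    for x
  have Z: "Z > 0" unfolding Z_def by (rule partition_fn_pos[OF Q int0])
  have I: "I_plus > 0" "I_minus > 0"
    unfolding I_plus_def I_minus_def w_def using int_plus int_minus by (auto intro: integral_pos_prob_space[OF Q])
  have avg: "gibbs_avg Q h \<beta> (\<lambda>x. exp (y x)) + gibbs_avg Q h \<beta> (\<lambda>x. exp (- y x)) = (I_plus + I_minus) / Z"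
    by (simp add: gibbs_avg_def I_plus_def I_minus_def Z_def w_def add_divide_distrib)
  \<comment> \<open>\<open>e\<^sup>u \<ge> 1 + u\<close> at \<open>u = |y| - c\<close>; this \<open>c\<close> makes the right-hand side
    average to exactly \<open>c\<close>.\<close>
  have pointwise: "\<bar>y x\<bar> * w x \<le> R x" for x
  proof -
    have "\<bar>y x\<bar> \<le> exp (\<bar>y x\<bar> - c) + c - 1"
      using exp_ge_add_one_self[of "\<bar>y x\<bar> - c"] by linarith
    also have "exp (\<bar>y x\<bar> - c) \<le> exp (- c) * (exp (y x) + exp (- y x))"
      by (cases "y x \<ge> 0") (simp_all add: exp_diff exp_minus field_simps add_pos_pos)
    finally have "\<bar>y x\<bar> * w x \<le> (exp (- c) * (exp (y x) + exp (- y x)) + c - 1) * w x"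
      unfolding w_def by (intro mult_right_mono) auto
    then show ?thesis by (simp add: R_def algebra_simps)
  qed
  have R: "integrable Q R"
    unfolding R_def w_def using int0 int_plus int_minus by simp
  have "w \<in> borel_measurable Q"
    using int0 unfolding w_def by (rule borel_measurable_integrable)
  then have "(\<lambda>x. \<bar>y x\<bar> * w x) \<in> borel_measurable Q"
    using y by measurable
  moreover have "norm (\<bar>y x\<bar> * w x) \<le> norm (R x)" for x
    using pointwise[of x] by (simp add: w_def abs_mult)
  ultimately have "integrable Q (\<lambda>x. \<bar>y x\<bar> * w x)"
    by (intro Bochner_Integration.integrable_bound[OF R] AE_I2)
  then have "(\<integral>x. \<bar>y x\<bar> * w x \<partial>Q) \<le> (\<integral>x. R x \<partial>Q)"
    using R pointwise by (rule integral_mono)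
  also have "(\<integral>x. R x \<partial>Q) = exp (- c) * (I_plus + I_minus) + (c - 1) * Z"
    unfolding R_def I_plus_def I_minus_def Z_def partition_fn_def w_def
    using int0 int_plus int_minus by (simp add: distrib_left)
  also have "\<dots> = c * Z"
    using I Z by (simp add: c_def exp_minus field_simps)
  finally have "(\<integral>x. \<bar>y x\<bar> * w x \<partial>Q) / Z \<le> c"
    using Z by (simp add: pos_divide_le_eq)
  then show ?thesis
    unfolding avg c_def[symmetric] by (simp add: gibbs_avg_def w_def Z_def)
qed

lemma partition_fn_eq_exp_free_energy:
  assumes "n > 0" and "partition_fn Q h b > 0"
  shows "partition_fn Q h b = exp (real n * free_energy n Q h b)"
  using assms by (simp add: free_energy_def)

lemma ln_exp_add_exp_le:
  fixes a b :: real
  shows "ln (exp a + exp b) \<le> ln 2 + max a b"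
proof -
  have "ln (exp a + exp b) \<le> ln (2 * exp (max a b))"
    by (intro ln_mono) (auto simp: max_def add_pos_pos)
  then show ?thesis by (simp add: ln_mult)
qed

lemma gibbs_avg_deviation_le_free_energy_increments:
  assumes Q: "prob_space Q" and h: "h \<in> borel_measurable Q"
    and int_plus: "integrable Q (\<lambda>x. exp ((\<beta> + \<delta>) * h x))"
    and int0: "integrable Q (\<lambda>x. exp (\<beta> * h x))"
    and int_minus: "integrable Q (\<lambda>x. exp ((\<beta> - \<delta>) * h x))"
    and \<delta>: "\<delta> > 0" and n: "n > 0"
  shows "gibbs_avg Q h \<beta> (\<lambda>x. \<bar>h x / real n - q\<bar>)
    \<le> ln 2 / (real n * \<delta>)
      + max (free_energy n Q h (\<beta> + \<delta>) - free_energy n Q h \<beta> - \<delta> * q)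
            (free_energy n Q h (\<beta> - \<delta>) - free_energy n Q h \<beta> + \<delta> * q) / \<delta>"
proof -
  define t where "t = real n * \<delta>"
  define y where "y x = t * (h x / real n - q)" for x
  define a where "a = (free_energy n Q h (\<beta> + \<delta>) - free_energy n Q h \<beta> - \<delta> * q) / \<delta>"
  define b where "b = (free_energy n Q h (\<beta> - \<delta>) - free_energy n Q h \<beta> + \<delta> * q) / \<delta>"
  have t: "t > 0" using \<delta> n by (simp add: t_def)
  have Z: "partition_fn Q h \<beta> = exp (real n * free_energy n Q h \<beta>)"
    "partition_fn Q h (\<beta> + \<delta>) = exp (real n * free_energy n Q h (\<beta> + \<delta>))"
    "partition_fn Q h (\<beta> - \<delta>) = exp (real n * free_energy n Q h (\<beta> - \<delta>))"
    using n partition_fn_pos[OF Q] int0 int_plus int_minus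
    by (auto intro!: partition_fn_eq_exp_free_energy)
  have y_plus: "exp (y x) = exp (- t * q) * exp (\<delta> * h x)" for x
    using n by (simp add: y_def t_def field_simps flip: exp_add)
  have y_minus: "exp (- y x) = exp (t * q) * exp ((- \<delta>) * h x)" for x
    using n by (simp add: y_def t_def field_simps flip: exp_add)
  have "gibbs_avg Q h \<beta> (\<lambda>x. exp (y x))
      = exp (- t * q) * (partition_fn Q h (\<beta> + \<delta>) / partition_fn Q h \<beta>)"
    by (simp only: y_plus gibbs_avg_cmult gibbs_avg_exp)
  also have "\<dots> = exp (t * a)"
    using \<delta> by (simp add: Z a_def t_def field_simps flip: exp_add exp_diff)
  finally have avg_plus: "gibbs_avg Q h \<beta> (\<lambda>x. exp (y x)) = exp (t * a)" .
  have "gibbs_avg Q h \<beta> (\<lambda>x. exp (- y x))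
      = exp (t * q) * (partition_fn Q h (\<beta> + - \<delta>) / partition_fn Q h \<beta>)"
    by (simp only: y_minus gibbs_avg_cmult gibbs_avg_exp)
  also have "\<dots> = exp (t * b)"
    using \<delta> by (simp add: Z b_def t_def field_simps flip: exp_add exp_diff)
  finally have avg_minus: "gibbs_avg Q h \<beta> (\<lambda>x. exp (- y x)) = exp (t * b)" .
  have abs_y: "gibbs_avg Q h \<beta> (\<lambda>x. \<bar>y x\<bar>) = t * gibbs_avg Q h \<beta> (\<lambda>x. \<bar>h x / real n - q\<bar>)"
    using t by (simp add: y_def abs_mult gibbs_avg_cmult)
  have "gibbs_avg Q h \<beta> (\<lambda>x. \<bar>y x\<bar>)
      \<le> ln (gibbs_avg Q h \<beta> (\<lambda>x. exp (y x)) + gibbs_avg Q h \<beta> (\<lambda>x. exp (- y x)))"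
  proof (rule gibbs_avg_abs_le_ln_exp_moments[OF Q _ int0])
    show "y \<in> borel_measurable Q" unfolding y_def using h by measurable
    have "(\<lambda>x. exp (y x) * exp (\<beta> * h x)) = (\<lambda>x. exp (- t * q) * exp ((\<beta> + \<delta>) * h x))"
      by (simp add: y_plus algebra_simps flip: exp_add)
    then show "integrable Q (\<lambda>x. exp (y x) * exp (\<beta> * h x))"
      using int_plus by simp
    have "(\<lambda>x. exp (- y x) * exp (\<beta> * h x)) = (\<lambda>x. exp (t * q) * exp ((\<beta> - \<delta>) * h x))"
      by (simp add: y_minus algebra_simps flip: exp_add)
    then show "integrable Q (\<lambda>x. exp (- y x) * exp (\<beta> * h x))"
      using int_minus by simp
  qed
  then have "t * gibbs_avg Q h \<beta> (\<lambda>x. \<bar>h x / real n - q\<bar>) \<le> ln 2 + t * max a b"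
    using ln_exp_add_exp_le[of "t * a" "t * b"] t
    unfolding abs_y avg_plus avg_minus by (simp add: max_mult_distrib_left)
  then have "gibbs_avg Q h \<beta> (\<lambda>x. \<bar>h x / real n - q\<bar>) \<le> (ln 2 + t * max a b) / t"
    using t by (simp add: pos_le_divide_eq mult.commute)
  also have "\<dots> = ln 2 / (real n * \<delta>)
      + max (free_energy n Q h (\<beta> + \<delta>) - free_energy n Q h \<beta> - \<delta> * q)
            (free_energy n Q h (\<beta> - \<delta>) - free_energy n Q h \<beta> + \<delta> * q) / \<delta>"
    using t \<delta> n by (simp add: add_divide_distrib a_def b_def t_def max_divide_distrib_right)
  finally show ?thesis .
qed

lemma gibbs_avg_deviation_le_free_energy_errors:
  assumes "prob_space Q" and "h \<in> borel_measurable Q"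
    and "integrable Q (\<lambda>x. exp ((\<beta> + \<delta>) * h x))"
    and "integrable Q (\<lambda>x. exp (\<beta> * h x))"
    and "integrable Q (\<lambda>x. exp ((\<beta> - \<delta>) * h x))"
    and \<delta>: "\<delta> > 0" and "n > 0"
  shows "gibbs_avg Q h \<beta> (\<lambda>x. \<bar>h x / real n - q\<bar>)
    \<le> ln 2 / (real n * \<delta>)
      + (\<bar>free_energy n Q h (\<beta> + \<delta>) - p (\<beta> + \<delta>)\<bar> + \<bar>free_energy n Q h (\<beta> - \<delta>) - p (\<beta> - \<delta>)\<bar>
         + 2 * \<bar>free_energy n Q h \<beta> - p \<beta>\<bar>) / \<delta>
      + max (p (\<beta> + \<delta>) - p \<beta> - \<delta> * q) (p (\<beta> - \<delta>) - p \<beta> + \<delta> * q) / \<delta>"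
proof -
  let ?F = "free_energy n Q h"
  define E where "E = \<bar>?F (\<beta> + \<delta>) - p (\<beta> + \<delta>)\<bar> + \<bar>?F (\<beta> - \<delta>) - p (\<beta> - \<delta>)\<bar>
    + 2 * \<bar>?F \<beta> - p \<beta>\<bar>"
  have "?F (\<beta> + \<delta>) - ?F \<beta> - \<delta> * q \<le> E + (p (\<beta> + \<delta>) - p \<beta> - \<delta> * q)"
    "?F (\<beta> - \<delta>) - ?F \<beta> + \<delta> * q \<le> E + (p (\<beta> - \<delta>) - p \<beta> + \<delta> * q)"
    unfolding E_def by (simp_all add: abs_if)
  then have "max (?F (\<beta> + \<delta>) - ?F \<beta> - \<delta> * q) (?F (\<beta> - \<delta>) - ?F \<beta> + \<delta> * q)
    \<le> E + max (p (\<beta> + \<delta>) - p \<beta> - \<delta> * q) (p (\<beta> - \<delta>) - p \<beta> + \<delta> * q)"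
    unfolding max_add_distrib_right by (rule max.mono)
  then have "max (?F (\<beta> + \<delta>) - ?F \<beta> - \<delta> * q) (?F (\<beta> - \<delta>) - ?F \<beta> + \<delta> * q) / \<delta>
    \<le> E / \<delta> + max (p (\<beta> + \<delta>) - p \<beta> - \<delta> * q) (p (\<beta> - \<delta>) - p \<beta> + \<delta> * q) / \<delta>"
    using \<delta> by (simp add: divide_right_mono flip: add_divide_distrib)
  with gibbs_avg_deviation_le_free_energy_increments[OF assms, of q] show ?thesis
    unfolding E_def by linarith
qed

section \<open>Exponential moments of Gaussian fields\<close>

lemma normal_density_mult_exp_le:
  fixes s b x :: real
  assumes s: "s > 0"
  shows "normal_density 0 s x * exp (b * x) \<le> sqrt 2 * exp (b\<^sup>2 * s\<^sup>2) * normal_density 0 (sqrt 2 * s) x"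
proof -
  have "b * x \<le> b\<^sup>2 * s\<^sup>2 + x\<^sup>2 / (4 * s\<^sup>2)"
  proof -
    have "0 \<le> (b * s - x / (2 * s))\<^sup>2" by simp
    also have "\<dots> = b\<^sup>2 * s\<^sup>2 + x\<^sup>2 / (4 * s\<^sup>2) - b * x"
      using s by (simp add: power2_eq_square field_simps)
    finally show ?thesis by simp
  qed
  moreover have "x\<^sup>2 / (2 * s\<^sup>2) = x\<^sup>2 / (4 * s\<^sup>2) + x\<^sup>2 / (4 * s\<^sup>2)"
    using s by (simp add: field_simps)
  moreover have "2 * (sqrt 2 * s)\<^sup>2 = 4 * s\<^sup>2"
    by (simp add: power_mult_distrib)
  ultimately have exponent: "- x\<^sup>2 / (2 * s\<^sup>2) + b * x \<le> b\<^sup>2 * s\<^sup>2 + (- x\<^sup>2 / (2 * (sqrt 2 * s)\<^sup>2))"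
    by simp
  have "sqrt (2 * pi * (sqrt 2 * s)\<^sup>2) = sqrt 2 * sqrt (2 * pi * s\<^sup>2)"
    by (simp add: power_mult_distrib real_sqrt_mult[symmetric] algebra_simps)
  then have density: "normal_density 0 (sqrt 2 * s) x
      = exp (- x\<^sup>2 / (2 * (sqrt 2 * s)\<^sup>2)) / (sqrt 2 * sqrt (2 * pi * s\<^sup>2))"
    by (simp add: normal_density_def)
  have "normal_density 0 s x * exp (b * x) = exp (- x\<^sup>2 / (2 * s\<^sup>2) + b * x) / sqrt (2 * pi * s\<^sup>2)"
    by (simp add: normal_density_def exp_add[symmetric] exp_diff)
  also have "\<dots> \<le> exp (b\<^sup>2 * s\<^sup>2 + (- x\<^sup>2 / (2 * (sqrt 2 * s)\<^sup>2))) / sqrt (2 * pi * s\<^sup>2)"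
    using exponent s by (intro divide_right_mono) auto
  also have "\<dots> = sqrt 2 * exp (b\<^sup>2 * s\<^sup>2) * normal_density 0 (sqrt 2 * s) x"
    unfolding density exp_add by simp
  finally show ?thesis .
qed

lemma nn_integral_exp_normal_le:
  assumes X: "distributed M lborel X (normal_density 0 s)" and s: "s > 0"
  shows "(\<integral>\<^sup>+\<omega>. ennreal (exp (b * X \<omega>)) \<partial>M) \<le> ennreal (sqrt 2 * exp (b\<^sup>2 * s\<^sup>2))"
proof -
  have "(\<integral>\<^sup>+\<omega>. ennreal (exp (b * X \<omega>)) \<partial>M)
      = (\<integral>\<^sup>+x. ennreal (normal_density 0 s x) * ennreal (exp (b * x)) \<partial>lborel)"
    by (rule distributed_nn_integral[OF X, symmetric]) simp
  also have "\<dots> \<le> (\<integral>\<^sup>+x. ennreal (sqrt 2 * exp (b\<^sup>2 * s\<^sup>2)) * ennreal (normal_density 0 (sqrt 2 * s) x) \<partial>lborel)"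
    by (intro nn_integral_mono)
      (simp add: normal_density_mult_exp_le[OF s] flip: ennreal_mult')
  also have "\<dots> = ennreal (sqrt 2 * exp (b\<^sup>2 * s\<^sup>2))"
    using s by (simp add: nn_integral_cmult nn_integral_eq_integral)
  finally show ?thesis .
qed

lemma centered_gaussian_field_component:
  assumes "centered_gaussian_field M T X" and "i \<in> T"
  shows "centered_gaussian M (X i)"
proof -
  have "centered_gaussian M (\<lambda>\<omega>. \<Sum>j\<in>{i}. 1 * X j \<omega>)"
    using assms(1)[unfolded centered_gaussian_field_def, rule_format, of "{i}" "\<lambda>_. 1"] assms(2)
    by simp
  then show ?thesis by simp
qed

lemma centered_gaussian_distributed_normal:
  assumes M: "prob_space M" and X: "centered_gaussian M X"
    and var: "prob_space.variance M X = v" and v: "v > 0"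
  shows "distributed M lborel X (normal_density 0 (sqrt v))"
proof -
  interpret M: prob_space M by fact
  have Xm: "X \<in> borel_measurable M" using X unfolding centered_gaussian_def by blast
  have "\<not> (AE \<omega> in M. X \<omega> = 0)"
  proof
    assume X0: "AE \<omega> in M. X \<omega> = 0"
    have "(\<integral>\<omega>. X \<omega> \<partial>M) = (\<integral>\<omega>. 0 \<partial>M)"
      by (rule integral_cong_AE[OF Xm _ X0]) simp
    moreover have "(\<integral>\<omega>. (X \<omega>)\<^sup>2 \<partial>M) = (\<integral>\<omega>. 0 \<partial>M)"
      by (rule integral_cong_AE) (use Xm X0 in \<open>measurable, auto elim: AE_mp\<close>)
    ultimately have "M.variance X = 0" by simp
    with var v show False by simp
  qed
  then obtain s where s: "s > 0" and D: "distributed M lborel X (normal_density 0 s)"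
    using X unfolding centered_gaussian_def by blast
  have "s\<^sup>2 = v" using M.normal_distributed_variance[OF s D] var by simp
  then have "s = sqrt v" using s by (metis abs_of_pos real_sqrt_abs)
  then show ?thesis using D by simp
qed

lemma AE_integrable_section:
  fixes f :: "'a \<Rightarrow> 'b \<Rightarrow> real"
  assumes P: "finite_measure P" and M: "sigma_finite_measure M"
    and f: "(\<lambda>(x, y). f x y) \<in> borel_measurable (P \<Otimes>\<^sub>M M)"
    and bound: "\<And>x. x \<in> space P \<Longrightarrow> (\<integral>\<^sup>+y. ennreal (norm (f x y)) \<partial>M) \<le> ennreal K"
  shows "AE y in M. integrable P (\<lambda>x. f x y)"
proof -
  interpret P: finite_measure P by fact
  interpret pair_sigma_finite P M
    using M by (simp add: pair_sigma_finite_def P.sigma_finite_measure_axioms)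
  have f_split: "(\<lambda>z. f (fst z) (snd z)) \<in> borel_measurable (P \<Otimes>\<^sub>M M)"
    using f by (simp add: split_beta')
  have f_swap: "(\<lambda>z. f (snd z) (fst z)) \<in> borel_measurable (M \<Otimes>\<^sub>M P)"
    using measurable_compose[OF measurable_pair_swap' f] by (simp add: split_beta')
  have "(\<integral>\<^sup>+y. (\<integral>\<^sup>+x. ennreal (norm (f x y)) \<partial>P) \<partial>M)
      = (\<integral>\<^sup>+x. (\<integral>\<^sup>+y. ennreal (norm (f x y)) \<partial>M) \<partial>P)"
    using f_split by (intro Fubini') measurable
  also have "\<dots> \<le> (\<integral>\<^sup>+x. ennreal K \<partial>P)"
    using bound by (intro nn_integral_mono) simp
  also have "\<dots> < \<infinity>"
    by (simp add: ennreal_mult_eq_top_iff top.not_eq_extremum[symmetric])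
  finally have "(\<integral>\<^sup>+y. (\<integral>\<^sup>+x. ennreal (norm (f x y)) \<partial>P) \<partial>M) \<noteq> \<infinity>" by simp
  then have "AE y in M. (\<integral>\<^sup>+x. ennreal (norm (f x y)) \<partial>P) \<noteq> \<infinity>"
    using f_swap by (intro nn_integral_PInf_AE) measurable
  then show ?thesis
  proof (rule AE_mp[OF _ AE_I2[OF impI]])
    fix y assume y: "y \<in> space M" and fin: "(\<integral>\<^sup>+x. ennreal (norm (f x y)) \<partial>P) \<noteq> \<infinity>"
    have "(\<lambda>x. f x y) \<in> borel_measurable P"
      using measurable_compose[OF measurable_Pair2'[OF y] f] by simp
    then show "integrable P (\<lambda>x. f x y)"
      using fin by (intro integrableI_bounded) (auto simp: top.not_eq_extremum)
  qed
qed

lemma AE_integrable_exp_normal_section: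
  assumes P: "prob_space P" and M: "prob_space M"
    and X: "(\<lambda>(x, \<omega>). X x \<omega>) \<in> borel_measurable (P \<Otimes>\<^sub>M M)"
    and normal: "\<And>x. x \<in> space P \<Longrightarrow> distributed M lborel (X x) (normal_density 0 s)"
    and s: "s > 0"
  shows "AE \<omega> in M. integrable P (\<lambda>x. exp (b * X x \<omega>))"
proof (rule AE_integrable_section)
  show "finite_measure P" using P by (simp add: prob_space_def)
  show "sigma_finite_measure M" using M by (rule prob_space_imp_sigma_finite)
  show "(\<lambda>(x, \<omega>). exp (b * X x \<omega>)) \<in> borel_measurable (P \<Otimes>\<^sub>M M)"
    using X by (simp add: split_beta')
  show "(\<integral>\<^sup>+\<omega>. ennreal (norm (exp (b * X x \<omega>))) \<partial>M) \<le> ennreal (sqrt 2 * exp (b\<^sup>2 * s\<^sup>2))"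
    if "x \<in> space P" for x
    using nn_integral_exp_normal_le[OF normal[OF that] s] by simp
qed

lemma borel_measurable_gibbs_avg:
  fixes h :: "'a \<Rightarrow> 'w \<Rightarrow> real"
  assumes P: "sigma_finite_measure P"
    and h: "(\<lambda>(x, \<omega>). h x \<omega>) \<in> borel_measurable (P \<Otimes>\<^sub>M M)"
    and f: "f \<in> borel_measurable borel"
  shows "(\<lambda>\<omega>. gibbs_avg P (\<lambda>x. h x \<omega>) \<beta> (\<lambda>x. f (h x \<omega>))) \<in> borel_measurable M"
proof -
  interpret P: sigma_finite_measure P by fact
  have "(\<lambda>z. h (snd z) (fst z)) \<in> borel_measurable (M \<Otimes>\<^sub>M P)"
    using measurable_compose[OF measurable_pair_swap' h] by (simp add: split_beta')
  then show ?thesis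
    unfolding gibbs_avg_def partition_fn_def using f by measurable
qed

section \<open>Passing to the limit\<close>

lemma LIMSEQ_0_iterated_squeeze:
  fixes G :: "nat \<Rightarrow> real"
  assumes bound: "\<And>k. \<forall>\<^sub>F n in sequentially. \<bar>G n\<bar> \<le> U k n"
    and U: "\<And>k. (\<lambda>n. U k n) \<longlonglongrightarrow> L k" and L: "L \<longlonglongrightarrow> 0"
  shows "G \<longlonglongrightarrow> 0"
proof (rule tendstoI)
  fix e :: real assume e: "e > 0"
  then obtain k where k: "\<bar>L k\<bar> < e / 2"
    using tendstoD[OF L, of "e / 2"] by (auto simp: eventually_sequentially)
  have "\<forall>\<^sub>F n in sequentially. dist (U k n) (L k) < e / 2"
    using e by (intro tendstoD[OF U]) auto
  with bound[of k] show "\<forall>\<^sub>F n in sequentially. dist (G n) 0 < e"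
    by eventually_elim (use k in \<open>simp add: dist_real_def abs_if split: if_splits\<close>)
qed

lemma max_difference_quotient_error_tendsto_0:
  assumes p: "(p has_real_derivative p') (at \<beta>)"
    and d: "d \<longlonglongrightarrow> 0" and d_pos: "\<And>k. d k > 0"
  shows "(\<lambda>k. max (p (\<beta> + d k) - p \<beta> - d k * p') (p (\<beta> - d k) - p \<beta> + d k * p') / d k)
    \<longlonglongrightarrow> 0"
proof -
  have quotient: "((\<lambda>y. (p y - p \<beta>) / (y - \<beta>)) \<longlongrightarrow> p') (at \<beta>)"
    using p by (simp add: has_field_derivative_iff)
  have along: "(\<lambda>k. (p (\<beta> + c * d k) - p \<beta>) / (c * d k)) \<longlonglongrightarrow> p'" if c: "c \<noteq> 0" for c
  proof -
    have "(\<lambda>k. \<beta> + c * d k) \<longlonglongrightarrow> \<beta>"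
      using tendsto_add[OF tendsto_const tendsto_mult[OF tendsto_const d], of \<beta> c] by simp
    moreover have "\<beta> + c * d k \<in> UNIV - {\<beta>}" for k using c d_pos[of k] by simp
    ultimately have "(\<lambda>k. (p (\<beta> + c * d k) - p \<beta>) / ((\<beta> + c * d k) - \<beta>)) \<longlonglongrightarrow> p'"
      using quotient[unfolded tendsto_at_iff_sequentially, rule_format, of "\<lambda>k. \<beta> + c * d k"]
      by (simp add: comp_def)
    then show ?thesis by simp
  qed
  have "(\<lambda>k. max ((p (\<beta> + 1 * d k) - p \<beta>) / (1 * d k) - p') (p' - (p (\<beta> + (-1) * d k) - p \<beta>) / ((-1) * d k)))
      \<longlonglongrightarrow> max (p' - p') (p' - p')"
    using along[of 1] along[of "-1"] by (intro tendsto_max tendsto_diff tendsto_const) simp_all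
  moreover have "max ((p (\<beta> + 1 * d k) - p \<beta>) / (1 * d k) - p') (p' - (p (\<beta> + (-1) * d k) - p \<beta>) / ((-1) * d k))
      = max (p (\<beta> + d k) - p \<beta> - d k * p') (p (\<beta> - d k) - p \<beta> + d k * p') / d k" for k
  proof -
    have "(p (\<beta> + 1 * d k) - p \<beta>) / (1 * d k) - p' = (p (\<beta> + d k) - p \<beta> - d k * p') / d k"
      using d_pos[of k] by (simp add: field_simps)
    moreover have "p' - (p (\<beta> + (-1) * d k) - p \<beta>) / ((-1) * d k) = (p (\<beta> - d k) - p \<beta> + d k * p') / d k"
      using d_pos[of k] by (simp add: field_simps)
    ultimately show ?thesis
      using d_pos[of k] by (simp add: max_divide_distrib_right)
  qed
  ultimately show ?thesis by simp
qed

lemma free_energy_errors_tendsto_0: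
  fixes F :: "nat \<Rightarrow> real \<Rightarrow> 'w \<Rightarrow> real" and \<beta> \<delta> :: real
  assumes M: "prob_space M"
    and F_AE: "\<And>b. AE \<omega> in M. (\<lambda>n. F n b \<omega>) \<longlonglongrightarrow> p b"
    and F_int: "\<And>b n. n \<ge> 1 \<Longrightarrow> integrable M (F n b)"
    and F_L1: "\<And>b. (\<lambda>n. \<integral>\<omega>. \<bar>F n b \<omega> - p b\<bar> \<partial>M) \<longlonglongrightarrow> 0"
  defines "e \<equiv> \<lambda>n \<omega>. ln 2 / (real n * \<delta>)
    + (\<bar>F n (\<beta> + \<delta>) \<omega> - p (\<beta> + \<delta>)\<bar> + \<bar>F n (\<beta> - \<delta>) \<omega> - p (\<beta> - \<delta>)\<bar> + 2 * \<bar>F n \<beta> \<omega> - p \<beta>\<bar>) / \<delta>"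
  shows "AE \<omega> in M. (\<lambda>n. e n \<omega>) \<longlonglongrightarrow> 0"
    and "\<And>m. m \<ge> 1 \<Longrightarrow> integrable M (e m)"
    and "(\<lambda>n. \<integral>\<omega>. e n \<omega> \<partial>M) \<longlonglongrightarrow> 0"
proof -
  interpret M: prob_space M by fact
  have ln: "(\<lambda>n. ln 2 / (real n * \<delta>)) \<longlonglongrightarrow> 0"
    using tendsto_mult[OF tendsto_const lim_inverse_n, of "ln 2 / \<delta>"]
    by (simp add: field_simps)
  have err: "(\<lambda>n. \<bar>f n - c\<bar>) \<longlonglongrightarrow> 0" if "f \<longlonglongrightarrow> c" for f :: "nat \<Rightarrow> real" and c
    using tendsto_rabs_zero[OF LIM_zero[OF that]] .
  show "AE \<omega> in M. (\<lambda>n. e n \<omega>) \<longlonglongrightarrow> 0"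
    using F_AE[of "\<beta> + \<delta>"] F_AE[of "\<beta> - \<delta>"] F_AE[of \<beta>]
  proof eventually_elim
    case (elim \<omega>)
    show ?case
      unfolding e_def
      using tendsto_add_zero[OF ln tendsto_divide_zero[OF tendsto_add_zero[OF tendsto_add_zero[OF
          err[OF elim(1)] err[OF elim(2)]] tendsto_mult_right_zero[OF err[OF elim(3)]]]]]
      by simp
  qed
  have F_err_int: "integrable M (\<lambda>\<omega>. \<bar>F n b \<omega> - p b\<bar>)" if "n \<ge> 1" for n b
    using F_int[OF that] by simp
  show "integrable M (e m)" if "m \<ge> 1" for m
    using that by (simp add: e_def F_err_int)
  have "\<forall>\<^sub>F n in sequentially. ln 2 / (real n * \<delta>)
      + ((\<integral>\<omega>. \<bar>F n (\<beta> + \<delta>) \<omega> - p (\<beta> + \<delta>)\<bar> \<partial>M) + (\<integral>\<omega>. \<bar>F n (\<beta> - \<delta>) \<omega> - p (\<beta> - \<delta>)\<bar> \<partial>M)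
         + 2 * (\<integral>\<omega>. \<bar>F n \<beta> \<omega> - p \<beta>\<bar> \<partial>M)) / \<delta>
      = (\<integral>\<omega>. e n \<omega> \<partial>M)"
    using eventually_ge_at_top[of 1] by eventually_elim (simp add: e_def F_err_int M.prob_space)
  then show "(\<lambda>n. \<integral>\<omega>. e n \<omega> \<partial>M) \<longlonglongrightarrow> 0"
    by (rule Lim_transform_eventually[OF tendsto_add_zero[OF ln tendsto_divide_zero[OF
          tendsto_add_zero[OF tendsto_add_zero[OF F_L1 F_L1] tendsto_mult_right_zero[OF F_L1]]]]])
qed

lemma AE_L1_tendsto_0_if_dominated_by_vanishing:
  fixes G :: "nat \<Rightarrow> 'w \<Rightarrow> real" and e :: "nat \<Rightarrow> nat \<Rightarrow> 'w \<Rightarrow> real"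
  assumes M: "prob_space M"
    and G_meas: "\<And>n. n \<ge> 1 \<Longrightarrow> G n \<in> borel_measurable M"
    and G_nonneg: "\<And>n \<omega>. 0 \<le> G n \<omega>"
    and bound: "AE \<omega> in M. \<forall>k n. n \<ge> 1 \<longrightarrow> G n \<omega> \<le> e k n \<omega> + L k"
    and e_int: "\<And>k n. n \<ge> 1 \<Longrightarrow> integrable M (e k n)"
    and e_AE: "\<And>k. AE \<omega> in M. (\<lambda>n. e k n \<omega>) \<longlonglongrightarrow> 0"
    and e_L1: "\<And>k. (\<lambda>n. \<integral>\<omega>. e k n \<omega> \<partial>M) \<longlonglongrightarrow> 0"
    and L: "L \<longlonglongrightarrow> 0"
  shows "(AE \<omega> in M. (\<lambda>n. G n \<omega>) \<longlonglongrightarrow> 0)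
    \<and> (\<forall>\<^sub>F n in sequentially. integrable M (G n))
    \<and> (\<lambda>n. \<integral>\<omega>. \<bar>G n \<omega>\<bar> \<partial>M) \<longlonglongrightarrow> 0"
proof (intro conjI)
  interpret M: prob_space M by fact
  have "AE \<omega> in M. \<forall>k. (\<lambda>n. e k n \<omega>) \<longlonglongrightarrow> 0"
    using e_AE by (simp add: AE_all_countable)
  with bound show "AE \<omega> in M. (\<lambda>n. G n \<omega>) \<longlonglongrightarrow> 0"
  proof eventually_elim
    case (elim \<omega>)
    show ?case
    proof (rule LIMSEQ_0_iterated_squeeze[OF _ _ L])
      show "\<forall>\<^sub>F n in sequentially. \<bar>G n \<omega>\<bar> \<le> e k n \<omega> + L k" for k
        using eventually_ge_at_top[of 1] by eventually_elim (use elim(1) G_nonneg in auto)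
      show "(\<lambda>n. e k n \<omega> + L k) \<longlonglongrightarrow> L k" for k
        using tendsto_add[OF elim(2)[rule_format, of k] tendsto_const] by simp
    qed
  qed
  have G_le: "AE \<omega> in M. \<bar>G n \<omega>\<bar> \<le> e k n \<omega> + L k" if "n \<ge> 1" for k n
    using bound by eventually_elim (use that G_nonneg in auto)
  have G_int: "integrable M (G n)" if n: "n \<ge> 1" for n
  proof (rule Bochner_Integration.integrable_bound[OF _ G_meas[OF n]])
    show "integrable M (\<lambda>\<omega>. e 0 n \<omega> + L 0)" using e_int[OF n] by simp
    show "AE \<omega> in M. norm (G n \<omega>) \<le> norm (e 0 n \<omega> + L 0)"
      using G_le[OF n, of 0] by eventually_elim simp
  qed
  then show "\<forall>\<^sub>F n in sequentially. integrable M (G n)"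
    using eventually_ge_at_top[of 1] by (rule eventually_mono[rotated])
  show "(\<lambda>n. \<integral>\<omega>. \<bar>G n \<omega>\<bar> \<partial>M) \<longlonglongrightarrow> 0"
  proof (rule LIMSEQ_0_iterated_squeeze[OF _ _ L])
    show "\<forall>\<^sub>F n in sequentially. \<bar>\<integral>\<omega>. \<bar>G n \<omega>\<bar> \<partial>M\<bar> \<le> (\<integral>\<omega>. e k n \<omega> \<partial>M) + L k" for k
      using eventually_ge_at_top[of 1]
    proof eventually_elim
      case (elim n)
      have "(\<integral>\<omega>. \<bar>G n \<omega>\<bar> \<partial>M) \<le> (\<integral>\<omega>. e k n \<omega> + L k \<partial>M)"
        using G_int[OF elim] e_int[OF elim] G_le[OF elim] by (intro integral_mono_AE) auto
      then show ?case using e_int[OF elim] by (simp add: M.prob_space)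
    qed
    show "(\<lambda>n. (\<integral>\<omega>. e k n \<omega> \<partial>M) + L k) \<longlonglongrightarrow> L k" for k
      using tendsto_add[OF e_L1 tendsto_const] by simp
  qed
qed

lemma AE_gibbs_avg_deviation_le_free_energy_errors:
  fixes H :: "nat \<Rightarrow> 'a \<Rightarrow> 'w \<Rightarrow> real" and d :: "nat \<Rightarrow> real" and \<beta> q :: real
  assumes P: "\<And>n. n \<ge> 1 \<Longrightarrow> prob_space (P n)"
    and H_meas: "\<And>n. n \<ge> 1 \<Longrightarrow> (\<lambda>(\<sigma>, \<omega>). H n \<sigma> \<omega>) \<in> borel_measurable (P n \<Otimes>\<^sub>M M)"
    and exp_int: "\<And>n b. n \<ge> 1 \<Longrightarrow> AE \<omega> in M. integrable (P n) (\<lambda>\<sigma>. exp (b * H n \<sigma> \<omega>))"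
    and d: "\<And>k. d k > 0"
  defines "F \<equiv> \<lambda>n b \<omega>. free_energy n (P n) (\<lambda>\<sigma>. H n \<sigma> \<omega>) b"
  shows "AE \<omega> in M. \<forall>k n. n \<ge> 1 \<longrightarrow>
    gibbs_avg (P n) (\<lambda>\<sigma>. H n \<sigma> \<omega>) \<beta> (\<lambda>\<sigma>. \<bar>H n \<sigma> \<omega> / real n - q\<bar>)
      \<le> ln 2 / (real n * d k)
        + (\<bar>F n (\<beta> + d k) \<omega> - p (\<beta> + d k)\<bar> + \<bar>F n (\<beta> - d k) \<omega> - p (\<beta> - d k)\<bar>
           + 2 * \<bar>F n \<beta> \<omega> - p \<beta>\<bar>) / d k
        + max (p (\<beta> + d k) - p \<beta> - d k * q) (p (\<beta> - d k) - p \<beta> + d k * q) / d k"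
proof -
  have "AE \<omega> in M. n \<ge> 1 \<longrightarrow> integrable (P n) (\<lambda>\<sigma>. exp (b * H n \<sigma> \<omega>))" for n b
    by (cases "n \<ge> 1") (simp_all add: exp_int)
  then have "AE \<omega> in M. \<forall>k n. n \<ge> 1 \<longrightarrow> integrable (P n) (\<lambda>\<sigma>. exp ((\<beta> + d k) * H n \<sigma> \<omega>))
      \<and> integrable (P n) (\<lambda>\<sigma>. exp (\<beta> * H n \<sigma> \<omega>)) \<and> integrable (P n) (\<lambda>\<sigma>. exp ((\<beta> - d k) * H n \<sigma> \<omega>))"
    by (simp add: AE_all_countable AE_conj_iff imp_conjR)
  then show ?thesis
    using AE_space
  proof eventually_elim
    case (elim \<omega>)
    have "(\<lambda>\<sigma>. H n \<sigma> \<omega>) \<in> borel_measurable (P n)" if "n \<ge> 1" for n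
      using measurable_compose[OF measurable_Pair2'[OF elim(2)] H_meas[OF that]] by simp
    with elim(1) P d show ?case
      unfolding F_def by (auto intro!: gibbs_avg_deviation_le_free_energy_errors)
  qed
qed

lemma gibbs_avg_deviation_AE_L1_tendsto_0:
  fixes H :: "nat \<Rightarrow> 'a \<Rightarrow> 'w \<Rightarrow> real"
  assumes M: "prob_space M"
    and P: "\<And>n. n \<ge> 1 \<Longrightarrow> prob_space (P n)"
    and H_meas: "\<And>n. n \<ge> 1 \<Longrightarrow> (\<lambda>(\<sigma>, \<omega>). H n \<sigma> \<omega>) \<in> borel_measurable (P n \<Otimes>\<^sub>M M)"
    and exp_int: "\<And>n b. n \<ge> 1 \<Longrightarrow> AE \<omega> in M. integrable (P n) (\<lambda>\<sigma>. exp (b * H n \<sigma> \<omega>))"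
    and F_AE: "\<And>b. AE \<omega> in M. (\<lambda>n. free_energy n (P n) (\<lambda>\<sigma>. H n \<sigma> \<omega>) b) \<longlonglongrightarrow> p b"
    and F_int: "\<And>b n. n \<ge> 1 \<Longrightarrow> integrable M (\<lambda>\<omega>. free_energy n (P n) (\<lambda>\<sigma>. H n \<sigma> \<omega>) b)"
    and F_L1: "\<And>b. (\<lambda>n. \<integral>\<omega>. \<bar>free_energy n (P n) (\<lambda>\<sigma>. H n \<sigma> \<omega>) b - p b\<bar> \<partial>M) \<longlonglongrightarrow> 0"
    and p: "(p has_real_derivative p') (at \<beta>)"
  shows "(AE \<omega> in M. (\<lambda>n. gibbs_avg (P n) (\<lambda>\<sigma>. H n \<sigma> \<omega>) \<beta>
                         (\<lambda>\<sigma>. \<bar>H n \<sigma> \<omega> / real n - p'\<bar>)) \<longlonglongrightarrow> 0)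
       \<and> (\<forall>\<^sub>F n in sequentially. integrable M (\<lambda>\<omega>. gibbs_avg (P n) (\<lambda>\<sigma>. H n \<sigma> \<omega>) \<beta>
                         (\<lambda>\<sigma>. \<bar>H n \<sigma> \<omega> / real n - p'\<bar>)))
       \<and> (\<lambda>n. \<integral>\<omega>. \<bar>gibbs_avg (P n) (\<lambda>\<sigma>. H n \<sigma> \<omega>) \<beta>
                         (\<lambda>\<sigma>. \<bar>H n \<sigma> \<omega> / real n - p'\<bar>)\<bar> \<partial>M) \<longlonglongrightarrow> 0"
proof -
  define \<delta> :: "nat \<Rightarrow> real" where "\<delta> k = 1 / real (Suc k)" for k
  define F where "F n b \<omega> = free_energy n (P n) (\<lambda>\<sigma>. H n \<sigma> \<omega>) b" for n b \<omega>
  define e where "e k n \<omega> = ln 2 / (real n * \<delta> k)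
    + (\<bar>F n (\<beta> + \<delta> k) \<omega> - p (\<beta> + \<delta> k)\<bar> + \<bar>F n (\<beta> - \<delta> k) \<omega> - p (\<beta> - \<delta> k)\<bar>
       + 2 * \<bar>F n \<beta> \<omega> - p \<beta>\<bar>) / \<delta> k" for k n \<omega>
  define L where "L k = max (p (\<beta> + \<delta> k) - p \<beta> - \<delta> k * p') (p (\<beta> - \<delta> k) - p \<beta> + \<delta> k * p') / \<delta> k"
    for k
  have \<delta>_pos: "\<delta> k > 0" for k by (simp add: \<delta>_def)
  have \<delta>_lim: "\<delta> \<longlonglongrightarrow> 0"
    unfolding \<delta>_def using LIMSEQ_inverse_real_of_nat by (simp add: inverse_eq_divide)
  have bound: "AE \<omega> in M. \<forall>k n. n \<ge> 1 \<longrightarrow>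
      gibbs_avg (P n) (\<lambda>\<sigma>. H n \<sigma> \<omega>) \<beta> (\<lambda>\<sigma>. \<bar>H n \<sigma> \<omega> / real n - p'\<bar>) \<le> e k n \<omega> + L k"
    using AE_gibbs_avg_deviation_le_free_energy_errors[OF P H_meas exp_int \<delta>_pos, where \<beta> = \<beta> and q = p' and p = p]
    unfolding e_def L_def F_def by simp
  note errors = free_energy_errors_tendsto_0[where F = "\<lambda>n b \<omega>. free_energy n (P n) (\<lambda>\<sigma>. H n \<sigma> \<omega>) b"
      and \<beta> = \<beta> and \<delta> = "\<delta> k" for k, OF M F_AE F_int F_L1]
  show ?thesis
  proof (rule AE_L1_tendsto_0_if_dominated_by_vanishing[OF M _ _ bound])
    show "(\<lambda>\<omega>. gibbs_avg (P n) (\<lambda>\<sigma>. H n \<sigma> \<omega>) \<beta> (\<lambda>\<sigma>. \<bar>H n \<sigma> \<omega> / real n - p'\<bar>))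
        \<in> borel_measurable M" if "n \<ge> 1" for n
      using P[OF that] by (intro borel_measurable_gibbs_avg[OF _ H_meas[OF that]] prob_space_imp_sigma_finite)
        auto
    show "0 \<le> gibbs_avg (P n) (\<lambda>\<sigma>. H n \<sigma> \<omega>) \<beta> (\<lambda>\<sigma>. \<bar>H n \<sigma> \<omega> / real n - p'\<bar>)" for n \<omega>
      by (rule gibbs_avg_nonneg) simp
    show "AE \<omega> in M. (\<lambda>n. e k n \<omega>) \<longlonglongrightarrow> 0" for k
      unfolding e_def F_def by (rule errors(1))
    show "integrable M (e k n)" if "n \<ge> 1" for k n
      using errors(2)[OF _ that] unfolding e_def[abs_def] F_def by simp
    show "(\<lambda>n. \<integral>\<omega>. e k n \<omega> \<partial>M) \<longlonglongrightarrow> 0" for k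
      unfolding e_def F_def by (rule errors(3))
    show "L \<longlonglongrightarrow> 0"
      unfolding L_def by (rule max_difference_quotient_error_tendsto_0[OF p \<delta>_lim \<delta>_pos])
  qed
qed

theorem mainTheorem10:
  fixes M :: "'w measure"
    and P :: "nat \<Rightarrow> 'a::polish_space measure"
    and H :: "nat \<Rightarrow> 'a \<Rightarrow> 'w \<Rightarrow> real"
    and p :: "real \<Rightarrow> real"
    and E :: "nat \<Rightarrow> real"
    and \<phi> :: "nat \<Rightarrow> nat \<Rightarrow> 'a \<Rightarrow> real"
    and g :: "nat \<Rightarrow> nat \<Rightarrow> 'w \<Rightarrow> real"
    and \<beta> p' :: real
  assumes M: "prob_space M"
    and P: "\<And>n. n \<ge> 1 \<Longrightarrow> prob_space (P n) \<and> sets (P n) = sets borel"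
    and H_gauss: "\<And>n. n \<ge> 1 \<Longrightarrow> centered_gaussian_field M UNIV (H n)"
    and H_meas: "\<And>n. n \<ge> 1 \<Longrightarrow> (\<lambda>(\<sigma>, \<omega>). H n \<sigma> \<omega>) \<in> borel_measurable (P n \<Otimes>\<^sub>M M)"
    and A1_ae: "\<And>b. AE \<omega> in M. (\<lambda>n. free_energy n (P n) (\<lambda>\<sigma>. H n \<sigma> \<omega>) b) \<longlonglongrightarrow> p b"
    and A1_int: "\<And>b n. n \<ge> 1 \<Longrightarrow> integrable M (\<lambda>\<omega>. free_energy n (P n) (\<lambda>\<sigma>. H n \<sigma> \<omega>) b)"
    and A1_L1: "\<And>b. (\<lambda>n. \<integral>\<omega>. \<bar>free_energy n (P n) (\<lambda>\<sigma>. H n \<sigma> \<omega>) b - p b\<bar> \<partial>M) \<longlonglongrightarrow> 0"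
    and A2: "\<And>n \<sigma>. n \<ge> 1 \<Longrightarrow> prob_space.variance M (H n \<sigma>) = real n"
    and A3_nonneg: "\<And>n. n \<ge> 1 \<Longrightarrow> E n \<ge> 0"
    and A3_lim: "E \<longlonglongrightarrow> 0"
    and A3: "\<And>n \<sigma>1 \<sigma>2. n \<ge> 1 \<Longrightarrow> covariance M (H n \<sigma>1) (H n \<sigma>2) \<ge> - real n * E n"
    and A4_phi: "\<And>n i. n \<ge> 1 \<Longrightarrow> \<phi> n i \<in> borel_measurable (P n)"
    and A4_indep: "\<And>n. n \<ge> 1 \<Longrightarrow> prob_space.indep_vars M (\<lambda>_. borel) (g n) UNIV"
    and A4_normal: "\<And>n i. n \<ge> 1 \<Longrightarrow> distributed M lborel (g n i) (normal_density 0 1)"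
    and A4_series: "\<And>n \<sigma>. n \<ge> 1 \<Longrightarrow>
       (\<lambda>N. \<integral>\<omega>. (H n \<sigma> \<omega> - (\<Sum>i<N. g n i \<omega> * \<phi> n i \<sigma>))\<^sup>2 \<partial>M) \<longlonglongrightarrow> 0"
    and diff: "(p has_real_derivative p') (at \<beta>)"
  shows "(AE \<omega> in M. (\<lambda>n. gibbs_avg (P n) (\<lambda>\<sigma>. H n \<sigma> \<omega>) \<beta>
                         (\<lambda>\<sigma>. \<bar>H n \<sigma> \<omega> / real n - p'\<bar>)) \<longlonglongrightarrow> 0)
       \<and> (\<forall>\<^sub>F n in sequentially. integrable M (\<lambda>\<omega>. gibbs_avg (P n) (\<lambda>\<sigma>. H n \<sigma> \<omega>) \<beta>
                         (\<lambda>\<sigma>. \<bar>H n \<sigma> \<omega> / real n - p'\<bar>)))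
       \<and> (\<lambda>n. \<integral>\<omega>. \<bar>gibbs_avg (P n) (\<lambda>\<sigma>. H n \<sigma> \<omega>) \<beta>
                         (\<lambda>\<sigma>. \<bar>H n \<sigma> \<omega> / real n - p'\<bar>)\<bar> \<partial>M) \<longlonglongrightarrow> 0"
proof (rule gibbs_avg_deviation_AE_L1_tendsto_0[OF M _ H_meas _ A1_ae A1_int A1_L1 diff])
  show "prob_space (P n)" if "n \<ge> 1" for n
    using P[OF that] by simp
  show "AE \<omega> in M. integrable (P n) (\<lambda>\<sigma>. exp (b * H n \<sigma> \<omega>))" if n: "n \<ge> 1" for n b
  proof (rule AE_integrable_exp_normal_section[OF _ M H_meas[OF n]])
    show "prob_space (P n)" using P[OF n] by simp
    show "distributed M lborel (H n \<sigma>) (normal_density 0 (sqrt (real n)))" for \<sigma>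
      using n by (intro centered_gaussian_distributed_normal[OF M]
          centered_gaussian_field_component[OF H_gauss] A2) auto
    show "sqrt (real n) > 0" using n by simp
  qed
qed

end
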